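(* Let $B$ be a C*-algebra and $A\subseteq B$ a closed *-subalgebra satisfying the ideal intersection property relative to $B$. Let $J$ be a closed two-sided ideal of $B$. Then $$\mathrm{Ann}_B(\langle J\cap A\rangle_B)=\mathrm{Ann}_B(J).$$
   Context: $\langle S\rangle_B=[BSB]$ denotes the closed two-sided ideal of $B$ generated by $S\subseteq B$, where $[\cdot]$ is closed linear span. For a closed two-sided ideal $K$ of $B$, $\mathrm{Ann}_B(K)=\{x\in B: xk=0\ \forall k\in K\}$ (which equals $\{x\in B: kx=0\ \forall k\in K\}$). $A$ satisfies the ideal intersection property relative to $B$ if $J\cap A\neq\{0\}$ for every nonzero closed two-sided ideal $J$ of $B$. *)

theory Defs
  imports "HOL-Analysis.Analysis"
begin

class cstar_algebra = real_normed_algebra + banach +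
  fixes scaleC :: "complex \<Rightarrow> 'a \<Rightarrow> 'a"
    and cstar :: "'a \<Rightarrow> 'a"
  assumes scaleC_add_left: "scaleC (a + b) x = scaleC a x + scaleC b x"
    and scaleC_add_right: "scaleC a (x + y) = scaleC a x + scaleC a y"
    and scaleC_scaleC: "scaleC a (scaleC b x) = scaleC (a * b) x"
    and scaleC_one: "scaleC 1 x = x"
    and scaleR_scaleC: "scaleR r x = scaleC (complex_of_real r) x"
    and norm_scaleC: "norm (scaleC a x) = cmod a * norm x"
    and mult_scaleC_left: "scaleC a x * y = scaleC a (x * y)"
    and mult_scaleC_right: "x * scaleC a y = scaleC a (x * y)"
    and cstar_cstar: "cstar (cstar x) = x"
    and cstar_add: "cstar (x + y) = cstar x + cstar y"
    and cstar_scaleC: "cstar (scaleC a x) = scaleC (cnj a) (cstar x)"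
    and cstar_mult: "cstar (x * y) = cstar y * cstar x"
    and cstar_identity: "norm (cstar x * x) = (norm x)\<^sup>2"

definition cspan :: "'a::cstar_algebra set \<Rightarrow> 'a set" where
  "cspan S = {x. \<exists>F c. finite F \<and> F \<subseteq> S \<and> x = (\<Sum>v\<in>F. scaleC (c v) v)}"

definition csubspace :: "'a::cstar_algebra set \<Rightarrow> bool" where
  "csubspace S \<longleftrightarrow> 0 \<in> S \<and> (\<forall>x\<in>S. \<forall>y\<in>S. x + y \<in> S) \<and> (\<forall>a. \<forall>x\<in>S. scaleC a x \<in> S)"

definition closed_star_subalgebra :: "'a::cstar_algebra set \<Rightarrow> bool" where
  "closed_star_subalgebra A \<longleftrightarrow> closed A \<and> csubspace A \<and>
     (\<forall>x\<in>A. \<forall>y\<in>A. x * y \<in> A) \<and> (\<forall>x\<in>A. cstar x \<in> A)"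

definition closed_ideal :: "'a::cstar_algebra set \<Rightarrow> bool" where
  "closed_ideal J \<longleftrightarrow> closed J \<and> csubspace J \<and>
     (\<forall>b. \<forall>x\<in>J. b * x \<in> J \<and> x * b \<in> J)"

definition gen_ideal :: "'a::cstar_algebra set \<Rightarrow> 'a set" where
  "gen_ideal S = closure (cspan {b * s * c | b s c. s \<in> S})"

definition Ann :: "'a::cstar_algebra set \<Rightarrow> 'a set" where
  "Ann K = {x. \<forall>k\<in>K. x * k = 0}"

definition ideal_intersection_property :: "'a::cstar_algebra set \<Rightarrow> bool" where
  "ideal_intersection_property A \<longleftrightarrow>
     (\<forall>J. closed_ideal J \<and> J \<noteq> {0} \<longrightarrow> J \<inter> A \<noteq> {0})"

end

theory Submission
  imports Defs
begin

text \<open>Write \<open>K = \<langle>J \<inter> A\<rangle>\<close>. Since \<open>K \<subseteq> J\<close>, only \<open>Ann K \<subseteq> Ann J\<close> needs proof.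
  The set \<open>N = J \<inter> Ann K\<close> is a closed ideal of \<open>B\<close>. An element \<open>a \<in> N \<inter> A\<close> lies in
  \<open>J \<inter> A\<close>, so \<open>a\<^sup>* a a\<^sup>* \<in> K\<close> (\<open>B\<close> need not be unital, so \<open>a\<close> itself need not lie in
  \<open>K\<close>) and hence \<open>a a\<^sup>* a a\<^sup>* = 0\<close>, which forces \<open>a = 0\<close> by the
  C*-identity. The ideal intersection property therefore gives \<open>N = {0}\<close>; but for
  \<open>x \<in> Ann K\<close> and \<open>k \<in> J\<close> the product \<open>x k\<close> lies in \<open>N\<close>.\<close>

lemma scaleC_zero_right [simp]: "scaleC a (0::'a::cstar_algebra) = 0"
  using scaleC_add_right[of a "0::'a" 0] by simp

lemma cstar_mult_self_eq_zero:
  fixes x :: "'a::cstar_algebra"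
  assumes "cstar x * x = 0"
  shows "x = 0"
  using cstar_identity[of x] assms by simp

lemma mult_cstar_square_eq_zero:
  fixes x :: "'a::cstar_algebra"
  assumes "x * cstar x * x * cstar x = 0"
  shows "x = 0"
proof -
  define p where "p = x * cstar x"
  have "cstar p = p"
    unfolding p_def by (simp add: cstar_mult cstar_cstar)
  then have "cstar p * p = 0"
    using assms unfolding p_def by (simp add: mult.assoc)
  then have "p = 0"
    by (rule cstar_mult_self_eq_zero)
  then have "cstar (cstar x) * cstar x = 0"
    unfolding p_def by (simp add: cstar_cstar)
  then have "cstar x = 0"
    by (rule cstar_mult_self_eq_zero)
  then show "x = 0"
    using cstar_identity[of x] by simp
qed

lemma closed_ideal_zero: "closed_ideal J \<Longrightarrow> 0 \<in> J"
  unfolding closed_ideal_def csubspace_def by blast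

lemma closed_ideal_mult_left: "closed_ideal J \<Longrightarrow> x \<in> J \<Longrightarrow> b * x \<in> J"
  unfolding closed_ideal_def by blast

lemma closed_ideal_mult_right: "closed_ideal J \<Longrightarrow> x \<in> J \<Longrightarrow> x * b \<in> J"
  unfolding closed_ideal_def by blast

lemma closed_ideal_Int:
  "closed_ideal I \<Longrightarrow> closed_ideal J \<Longrightarrow> closed_ideal (I \<inter> J)"
  unfolding closed_ideal_def csubspace_def by auto

lemma csubspace_sum:
  assumes "csubspace S" "finite F" "F \<subseteq> S"
  shows "(\<Sum>v\<in>F. scaleC (c v) v) \<in> S"
  using assms(2,3) assms(1) by (induction F rule: finite_induct) (simp_all add: csubspace_def)

lemma cspan_minimal: "csubspace S \<Longrightarrow> G \<subseteq> S \<Longrightarrow> cspan G \<subseteq> S"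
  unfolding cspan_def using csubspace_sum by blast

lemma span_generator_mem_gen_ideal:
  assumes "s \<in> S"
  shows "b * s * c \<in> gen_ideal S"
proof -
  have "b * s * c = (\<Sum>v\<in>{b * s * c}. scaleC 1 v)"
    by (simp add: scaleC_one)
  then have "b * s * c \<in> cspan {b * s * c | b s c. s \<in> S}"
    unfolding cspan_def using assms
    by (intro CollectI exI[of _ "{b * s * c}"] exI[of _ "\<lambda>_. 1"]) auto
  then show ?thesis
    unfolding gen_ideal_def using closure_subset by blast
qed

lemma gen_ideal_minimal:
  assumes "closed T" "csubspace T" "\<And>b s c. s \<in> S \<Longrightarrow> b * s * c \<in> T"
  shows "gen_ideal S \<subseteq> T"
proof -
  have "{b * s * c | b s c. s \<in> S} \<subseteq> T"
    using assms(3) by blast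
  then have "cspan {b * s * c | b s c. s \<in> S} \<subseteq> T"
    using assms(2) by (rule cspan_minimal[rotated])
  then show ?thesis
    unfolding gen_ideal_def using assms(1) by (rule closure_minimal)
qed

lemma gen_ideal_subset_closed_ideal:
  assumes "closed_ideal J" "S \<subseteq> J"
  shows "gen_ideal S \<subseteq> J"
  using assms by (intro gen_ideal_minimal) (auto simp: closed_ideal_def)

lemma Ann_antimono: "K \<subseteq> L \<Longrightarrow> Ann L \<subseteq> Ann K"
  unfolding Ann_def by blast

lemma mem_Ann_gen_ideal_iff:
  "x \<in> Ann (gen_ideal S) \<longleftrightarrow> (\<forall>b c. \<forall>s\<in>S. x * (b * s * c) = 0)"
proof
  assume "x \<in> Ann (gen_ideal S)"
  then show "\<forall>b c. \<forall>s\<in>S. x * (b * s * c) = 0"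
    unfolding Ann_def using span_generator_mem_gen_ideal by blast
next
  assume generators: "\<forall>b c. \<forall>s\<in>S. x * (b * s * c) = 0"
  have "closed {k. x * k = 0}"
    by (intro closed_Collect_eq continuous_intros)
  moreover have "csubspace {k. x * k = 0}"
    by (simp add: csubspace_def distrib_left mult_scaleC_right)
  ultimately have "gen_ideal S \<subseteq> {k. x * k = 0}"
    using generators by (intro gen_ideal_minimal) auto
  then show "x \<in> Ann (gen_ideal S)"
    unfolding Ann_def by blast
qed

lemma closed_Ann: "closed (Ann K)"
proof -
  have "Ann K = (\<Inter>k\<in>K. {x. x * k = 0})"
    unfolding Ann_def by blast
  moreover have "closed {x. x * k = 0}" for k :: 'a
    by (intro closed_Collect_eq continuous_intros)
  ultimately show ?thesis
    by (simp add: closed_INT)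
qed

lemma closed_ideal_Ann_gen_ideal: "closed_ideal (Ann (gen_ideal S))"
  unfolding closed_ideal_def
proof (intro conjI allI ballI)
  show "closed (Ann (gen_ideal S))"
    by (rule closed_Ann)
  show "csubspace (Ann (gen_ideal S))"
    unfolding csubspace_def Ann_def by (auto simp: distrib_right mult_scaleC_left)
next
  fix a x
  assume "x \<in> Ann (gen_ideal S)"
  then have x: "x * (b * s * c) = 0" if "s \<in> S" for b s c
    using that unfolding mem_Ann_gen_ideal_iff by blast
  show "a * x \<in> Ann (gen_ideal S)"
    unfolding mem_Ann_gen_ideal_iff using x by (metis mult.assoc mult_zero_right)
  have "x * ((a * b) * s * c) = 0" if "s \<in> S" for b s c
    using x that by blast
  then show "x * a \<in> Ann (gen_ideal S)"
    unfolding mem_Ann_gen_ideal_iff by (simp add: mult.assoc)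
qed

lemma mem_Ann_gen_ideal_self_eq_zero:
  assumes "a \<in> S" "a \<in> Ann (gen_ideal S)"
  shows "a = 0"
proof -
  have "a * (cstar a * a * cstar a) = 0"
    using assms unfolding mem_Ann_gen_ideal_iff by blast
  then have "a * cstar a * a * cstar a = 0"
    by (simp only: mult.assoc)
  then show "a = 0"
    by (rule mult_cstar_square_eq_zero)
qed

lemma ideal_intersection_property_trivial_ideal:
  assumes "closed_star_subalgebra A" "ideal_intersection_property A"
    and "closed_ideal N" "N \<inter> A \<subseteq> {0}"
  shows "N = {0}"
proof -
  have "0 \<in> N \<inter> A"
    using assms(1) closed_ideal_zero[OF assms(3)] by (simp add: closed_star_subalgebra_def csubspace_def)
  then show ?thesis
    using assms(2-4) unfolding ideal_intersection_property_def by blast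
qed

theorem lemma3p2:
  fixes A J :: "'a::cstar_algebra set"
  assumes "closed_star_subalgebra A"
    and "ideal_intersection_property A"
    and "closed_ideal J"
  shows "Ann (gen_ideal (J \<inter> A)) = Ann J"
proof
  let ?K = "gen_ideal (J \<inter> A)"
  show "Ann J \<subseteq> Ann ?K"
    by (rule Ann_antimono, rule gen_ideal_subset_closed_ideal) (use assms(3) in auto)
  define N where "N = J \<inter> Ann ?K"
  have "closed_ideal N"
    unfolding N_def using assms(3) closed_ideal_Ann_gen_ideal by (rule closed_ideal_Int)
  moreover have "N \<inter> A \<subseteq> {0}"
    unfolding N_def using mem_Ann_gen_ideal_self_eq_zero[of _ "J \<inter> A"] by blast
  ultimately have "N = {0}"
    using assms(1,2) ideal_intersection_property_trivial_ideal by blast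
  moreover have "x * k \<in> N" if "x \<in> Ann ?K" "k \<in> J" for x k
    unfolding N_def using closed_ideal_mult_left[OF assms(3) that(2)]
      closed_ideal_mult_right[OF closed_ideal_Ann_gen_ideal that(1)] by blast
  ultimately show "Ann ?K \<subseteq> Ann J"
    unfolding Ann_def by blast
qed

end
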